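(* Let $\mathcal X$ be a finite alphabet and let $P_0,P_1,\hat P_0,\hat P_1$ be probability distributions on $\mathcal X$ with $P_0(x),P_1(x),\hat P_0(x),\hat P_1(x)>0$ for all $x\in\mathcal X$. An observation $\mathbf x=(x_1,\dots,x_n)$ is drawn i.i.d. from $P_0$ (hypothesis $0$) or from $P_1$ (hypothesis $1$). For a threshold $\hat\gamma\in\mathbb R$ consider the mismatched likelihood ratio test which, writing $\hat T$ for the type (empirical distribution) of $\mathbf x$, decides hypothesis $1$ if $D(\hat T\|\hat P_0)-D(\hat T\|\hat P_1)\ge\hat\gamma$ and hypothesis $0$ otherwise. Let $\epsilon_0$ be the probability under $P_0^n$ of deciding $1$ and $\epsilon_1$ the probability under $P_1^n$ of deciding $0$, and let $\hat E_i=\liminf_{n\to\infty}-\frac1n\log\epsilon_i$, $i\in\{0,1\}$. Then $$\hat E_0=\min_{Q\in\hat{\mathcal Q}_0}D(Q\|P_0),\qquad \hat E_1=\min_{Q\in\hat{\mathcal Q}_1}D(Q\|P_1),$$ where $\hat{\mathcal Q}_0=\{Q\in\mathcal P(\mathcal X):D(Q\|\hat P_0)-D(Q\|\hat P_1)\ge\hat\gamma\}$ and $\hat{\mathcal Q}_1=\{Q\in\mathcal P(\mathcal X):D(Q\|\hat P_0)-D(Q\|\hat P_1)\le\hat\gamma\}$. The minimizers are, respectively, $$\hat Q_{\lambda_0}(x)=\frac{P_0(x)\hat P_0^{-\lambda_0}(x)\hat P_1^{\lambda_0}(x)}{\sum_{a\in\mathcal X}P_0(a)\hat P_0^{-\lambda_0}(a)\hat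 P_1^{\lambda_0}(a)},\qquad \hat Q_{\lambda_1}(x)=\frac{P_1(x)\hat P_1^{-\lambda_1}(x)\hat P_0^{\lambda_1}(x)}{\sum_{a\in\mathcal X}P_1(a)\hat P_1^{-\lambda_1}(a)\hat P_0^{\lambda_1}(a)},$$ with $\lambda_0,\lambda_1\ge0$, where: if $D(P_0\|\hat P_0)-D(P_0\|\hat P_1)\le\hat\gamma$, then $\lambda_0$ is chosen so that $D(\hat Q_{\lambda_0}\|\hat P_0)-D(\hat Q_{\lambda_0}\|\hat P_1)=\hat\gamma$, and otherwise $\hat Q_{\lambda_0}=P_0$ and $\hat E_0=0$; if $D(P_1\|\hat P_0)-D(P_1\|\hat P_1)\ge\hat\gamma$, then $\lambda_1$ is chosen so that $D(\hat Q_{\lambda_1}\|\hat P_0)-D(\hat Q_{\lambda_1}\|\hat P_1)=\hat\gamma$, and otherwise $\hat Q_{\lambda_1}=P_1$ and $\hat E_1=0$. Furthermore, $$\hat E_0=\max_{\lambda\ge0}\Big\{\lambda\hat\gamma-\log\sum_{x\in\mathcal X}P_0(x)\hat P_0^{-\lambda}(x)\hat P_1^{\lambda}(x)\Big\},\qquad \hat E_1=\max_{\lambda\ge0}\Big\{-\lambda\hat\gamma-\log\sum_{x\in\mathcal X}\hat P_0^{\lambda}(x)P_1(x)\hat P_1^{-\lambda}(x)\Big\}.$$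
   Context: $D(P\|Q)=\sum_x P(x)\log\frac{P(x)}{Q(x)}$ is the relative entropy; $\mathcal P(\mathcal X)$ is the probability simplex on $\mathcal X$. The type of $\mathbf x$ is $\hat T(a)=N(a|\mathbf x)/n$, with $N(a|\mathbf x)$ the number of occurrences of $a$ in $\mathbf x$. Here $P_0,P_1$ are the true distributions and $\hat P_0,\hat P_1$ the (mismatched) distributions used by the test. *)

theory Defs
  imports "HOL-Analysis.Analysis"
begin

text \<open>Relative entropy (natural logarithm; convention 0 log 0 = 0 holds since 0 * _ = 0).\<close>
definition rel_entropy :: "('a::finite \<Rightarrow> real) \<Rightarrow> ('a \<Rightarrow> real) \<Rightarrow> real" where
  "rel_entropy P Q = (\<Sum>x\<in>UNIV. P x * ln (P x / Q x))"

definition prob_simplex :: "('a::finite \<Rightarrow> real) set" where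
  "prob_simplex = {Q. (\<forall>x. 0 \<le> Q x) \<and> (\<Sum>x\<in>UNIV. Q x) = 1}"

definition type_of :: "'a list \<Rightarrow> 'a \<Rightarrow> real" where
  "type_of xs a = real (count_list xs a) / real (length xs)"

definition mm_stat :: "('a::finite \<Rightarrow> real) \<Rightarrow> ('a \<Rightarrow> real) \<Rightarrow> ('a \<Rightarrow> real) \<Rightarrow> real" where
  "mm_stat hP0 hP1 Q = rel_entropy Q hP0 - rel_entropy Q hP1"

definition decides1 :: "('a::finite \<Rightarrow> real) \<Rightarrow> ('a \<Rightarrow> real) \<Rightarrow> real \<Rightarrow> 'a list \<Rightarrow> bool" where
  "decides1 hP0 hP1 g xs \<longleftrightarrow> mm_stat hP0 hP1 (type_of xs) \<ge> g"

definition iid_prob :: "('a::finite \<Rightarrow> real) \<Rightarrow> nat \<Rightarrow> ('a list \<Rightarrow> bool) \<Rightarrow> real" where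
  "iid_prob P n E = (\<Sum>xs\<in>{xs. length xs = n \<and> E xs}. prod_list (map P xs))"

definition err0 :: "('a::finite \<Rightarrow> real) \<Rightarrow> ('a \<Rightarrow> real) \<Rightarrow> ('a \<Rightarrow> real) \<Rightarrow> real \<Rightarrow> nat \<Rightarrow> real" where
  "err0 P0 hP0 hP1 g n = iid_prob P0 n (decides1 hP0 hP1 g)"

definition err1 :: "('a::finite \<Rightarrow> real) \<Rightarrow> ('a \<Rightarrow> real) \<Rightarrow> ('a \<Rightarrow> real) \<Rightarrow> real \<Rightarrow> nat \<Rightarrow> real" where
  "err1 P1 hP0 hP1 g n = iid_prob P1 n (\<lambda>xs. \<not> decides1 hP0 hP1 g xs)"

definition err_exponent :: "(nat \<Rightarrow> real) \<Rightarrow> ereal" where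
  "err_exponent eps = liminf (\<lambda>n. ereal (- ln (eps n) / real n))"

definition tilted :: "('a::finite \<Rightarrow> real) \<Rightarrow> ('a \<Rightarrow> real) \<Rightarrow> ('a \<Rightarrow> real) \<Rightarrow> real \<Rightarrow> 'a \<Rightarrow> real" where
  "tilted P A B l x = P x * A x powr (- l) * B x powr l
      / (\<Sum>a\<in>UNIV. P a * A a powr (- l) * B a powr l)"

end

theory Submission
  imports Defs
begin

text \<open>
  With \<open>f = ln (hP1 / hP0)\<close> the test statistic is linear in the type,
  \<open>D(Q\<parallel>hP0) - D(Q\<parallel>hP1) = \<Sum>\<^sub>x Q x f x\<close>, so \<open>\<epsilon>\<^sub>0\<close> is the probability that an i.i.d. sum
  \<open>\<Sum>\<^sub>i f x\<^sub>i\<close> exceeds \<open>n \<gamma>\<close>, and the theorem is Cramer's theorem for a finite alphabet.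
  The Gibbs inequality gives \<open>D(Q\<parallel>P) \<ge> \<lambda> E\<^sub>Q f - ln E\<^sub>P e\<^sup>\<lambda>\<^sup>f\<close> with equality at the
  tilted distribution \<open>P\<^sub>\<lambda> \<propto> P e\<^sup>\<lambda>\<^sup>f\<close>; choosing \<open>\<lambda> \<ge> 0\<close> by the intermediate value
  theorem so that the Karush--Kuhn--Tucker conditions hold identifies the minimiser and shows that the
  minimum equals the Chernoff maximum. The Chernoff bound then gives \<open>\<epsilon>\<^sub>0 \<le> e\<^sup>-\<^sup>n\<^sup>D\<close>, and a change
  of measure to a distribution close to \<open>P\<^sub>\<lambda>\<close> under which the error event is typical (a law of
  large numbers, again via Chernoff) gives the matching lower bound. The second error is the first
  one for the swapped pair \<open>(hP1, hP0)\<close> and threshold \<open>-\<gamma>\<close>.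
\<close>

section \<open>Probabilities under i.i.d. products\<close>

lemma iid_prob_eq_sum_if:
  "iid_prob P n E = (\<Sum>xs\<in>{xs. length xs = n}. if E xs then prod_list (map P xs) else 0)"
proof -
  have "{xs. length xs = n \<and> E xs} = {xs \<in> {xs. length xs = n}. E xs}" by auto
  then show ?thesis
    unfolding iid_prob_def using sum.inter_filter[OF finite_list_length] by simp
qed

lemma prod_list_map_nonneg: "(\<And>x. 0 \<le> P x) \<Longrightarrow> 0 \<le> prod_list (map (P :: 'a \<Rightarrow> real) xs)"
  by (induction xs) auto

lemma iid_prob_mono:
  assumes "\<And>x. 0 \<le> P x" and "\<And>xs. length xs = n \<Longrightarrow> E xs \<Longrightarrow> F xs"
  shows "iid_prob P n E \<le> iid_prob P n F"
  unfolding iid_prob_eq_sum_if by (rule sum_mono) (auto simp: assms prod_list_map_nonneg)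

lemma iid_prob_disj_le:
  assumes "\<And>x. 0 \<le> P x"
  shows "iid_prob P n (\<lambda>xs. F xs \<or> G xs) \<le> iid_prob P n F + iid_prob P n G"
  unfolding iid_prob_eq_sum_if sum.distrib[symmetric]
  by (rule sum_mono) (auto simp: assms prod_list_map_nonneg)

lemma iid_prob_change_of_measure:
  assumes "\<And>x. 0 \<le> Q x"
    and "\<And>xs. length xs = n \<Longrightarrow> E xs \<Longrightarrow> c * prod_list (map Q xs) \<le> prod_list (map P xs)"
  shows "c * iid_prob Q n E \<le> iid_prob P n E"
  unfolding iid_prob_eq_sum_if sum_distrib_left
  by (rule sum_mono) (auto simp: assms prod_list_map_nonneg)

lemma sum_lists_length_prod_list:
  fixes h :: "'a::finite \<Rightarrow> real"
  shows "(\<Sum>xs\<in>{xs. length xs = n}. prod_list (map h xs)) = (\<Sum>a\<in>UNIV. h a) ^ n"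
proof (induction n)
  case 0
  have "{xs::'a list. length xs = 0} = {[]}" by auto
  then show ?case by simp
next
  case (Suc n)
  have lists_Suc: "{xs. length xs = Suc n} = (\<lambda>(a, xs). a # xs) ` (UNIV \<times> {xs::'a list. length xs = n})"
    by (auto simp: image_iff length_Suc_conv)
  have inj: "inj_on (\<lambda>(a, xs). a # xs) (UNIV \<times> {xs::'a list. length xs = n})"
    by (auto simp: inj_on_def)
  have "(\<Sum>xs\<in>{xs. length xs = Suc n}. prod_list (map h xs))
      = (\<Sum>a\<in>UNIV. \<Sum>xs\<in>{xs::'a list. length xs = n}. h a * prod_list (map h xs))"
    unfolding lists_Suc sum.reindex[OF inj] sum.cartesian_product by (simp add: case_prod_beta)
  also have "\<dots> = (\<Sum>a\<in>UNIV. h a) * (\<Sum>xs\<in>{xs::'a list. length xs = n}. prod_list (map h xs))"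
    by (rule sum_product[symmetric])
  finally show ?case using Suc by simp
qed

lemma iid_prob_True:
  assumes "P \<in> prob_simplex"
  shows "iid_prob P n (\<lambda>_. True) = 1"
  using assms unfolding iid_prob_def prob_simplex_def by (simp add: sum_lists_length_prod_list)

lemma iid_prob_not:
  assumes "P \<in> prob_simplex"
  shows "iid_prob P n (\<lambda>xs. \<not> E xs) = 1 - iid_prob P n E"
proof -
  have "iid_prob P n (\<lambda>xs. \<not> E xs) + iid_prob P n E = iid_prob P n (\<lambda>_. True)"
    unfolding iid_prob_eq_sum_if sum.distrib[symmetric] by (rule sum.cong) auto
  then show ?thesis using iid_prob_True[OF assms] by simp
qed

lemma prod_list_map_mult_exp:
  "prod_list (map (\<lambda>x. a x * exp (b x)) xs) = prod_list (map a xs) * exp (sum_list (map (b :: 'a \<Rightarrow> real) xs))"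
  by (induction xs) (auto simp: exp_add algebra_simps)

lemma sum_list_map_uminus: "sum_list (map (\<lambda>x. - u x) xs) = - sum_list (map (u :: 'a \<Rightarrow> real) xs)"
  by (induction xs) auto

lemma iid_prob_chernoff_bound:
  fixes P u :: "'a::finite \<Rightarrow> real"
  assumes P: "\<And>x. 0 \<le> P x" and t: "0 \<le> t"
    and E: "\<And>xs. length xs = n \<Longrightarrow> E xs \<Longrightarrow> real n * c \<le> sum_list (map u xs)"
  shows "iid_prob P n E \<le> (\<Sum>a\<in>UNIV. P a * exp (t * (u a - c))) ^ n"
proof -
  have "(if E xs then prod_list (map P xs) else 0) \<le> prod_list (map (\<lambda>a. P a * exp (t * (u a - c))) xs)"
    if len: "length xs = n" for xs
  proof -
    have "sum_list (map (\<lambda>a. t * (u a - c)) xs) = t * (sum_list (map u xs) - real n * c)"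
      using len by (induction xs arbitrary: n) (auto simp: algebra_simps)
    then have eq: "prod_list (map (\<lambda>a. P a * exp (t * (u a - c))) xs)
        = prod_list (map P xs) * exp (t * (sum_list (map u xs) - real n * c))"
      by (simp add: prod_list_map_mult_exp)
    have "E xs \<Longrightarrow> 1 \<le> exp (t * (sum_list (map u xs) - real n * c))"
      using E[OF len] t by simp
    then show ?thesis
      unfolding eq using prod_list_map_nonneg[of P xs, OF P] by (simp add: mult_le_cancel_left1)
  qed
  then have "iid_prob P n E \<le> (\<Sum>xs\<in>{xs. length xs = n}. prod_list (map (\<lambda>a. P a * exp (t * (u a - c))) xs))"
    unfolding iid_prob_eq_sum_if by (intro sum_mono) simp
  then show ?thesis by (simp add: sum_lists_length_prod_list)
qed

section \<open>Tilted distributions and relative entropy\<close>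

definition expect :: "('a::finite \<Rightarrow> real) \<Rightarrow> ('a \<Rightarrow> real) \<Rightarrow> real" where
  "expect Q f = (\<Sum>a\<in>UNIV. Q a * f a)"

definition mgf :: "('a::finite \<Rightarrow> real) \<Rightarrow> ('a \<Rightarrow> real) \<Rightarrow> real \<Rightarrow> real" where
  "mgf P f l = (\<Sum>a\<in>UNIV. P a * exp (l * f a))"

definition tilt :: "('a::finite \<Rightarrow> real) \<Rightarrow> ('a \<Rightarrow> real) \<Rightarrow> real \<Rightarrow> 'a \<Rightarrow> real" where
  "tilt P f l x = P x * exp (l * f x) / mgf P f l"

lemma rel_entropy_self: "rel_entropy Q Q = 0"
  unfolding rel_entropy_def by (auto intro!: sum.neutral)

lemma rel_entropy_nonneg:
  fixes Q R :: "'a::finite \<Rightarrow> real"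
  assumes Q: "Q \<in> prob_simplex" and R: "\<And>x. 0 < R x" "(\<Sum>a\<in>UNIV. R a) = 1"
  shows "0 \<le> rel_entropy Q R"
proof -
  have Q0: "\<And>x. 0 \<le> Q x" and Q1: "(\<Sum>a\<in>UNIV. Q a) = 1"
    using Q by (auto simp: prob_simplex_def)
  have "Q x - R x \<le> Q x * ln (Q x / R x)" for x
  proof (cases "Q x = 0")
    case True
    then show ?thesis using R(1)[of x] by simp
  next
    case False
    then have "Q x > 0" using Q0[of x] by simp
    have "ln (R x / Q x) \<le> R x / Q x - 1"
      using ln_le_minus_one[of "R x / Q x"] \<open>Q x > 0\<close> R(1)[of x] by simp
    then have "Q x * (1 - R x / Q x) \<le> Q x * ln (Q x / R x)"
      using \<open>Q x > 0\<close> R(1)[of x] by (simp add: ln_div)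
    then show ?thesis using \<open>Q x > 0\<close> by (simp add: algebra_simps)
  qed
  then have "(\<Sum>a\<in>UNIV. Q a - R a) \<le> rel_entropy Q R"
    unfolding rel_entropy_def by (rule sum_mono)
  then show ?thesis using Q1 R(2) by (simp add: sum_subtractf)
qed

lemma mgf_pos: "(\<And>x. 0 < P x) \<Longrightarrow> 0 < mgf P f l"
  unfolding mgf_def by (intro sum_pos) auto

lemma tilt_pos: "(\<And>x. 0 < P x) \<Longrightarrow> 0 < tilt P f l x"
  unfolding tilt_def by (intro divide_pos_pos mult_pos_pos mgf_pos) auto

lemma sum_tilt: "(\<And>x. 0 < P x) \<Longrightarrow> (\<Sum>a\<in>UNIV. tilt P f l a) = 1"
  unfolding tilt_def using mgf_pos[of P f l] by (simp add: sum_divide_distrib[symmetric] mgf_def)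

lemma tilt_in_prob_simplex: "(\<And>x. 0 < P x) \<Longrightarrow> tilt P f l \<in> prob_simplex"
  unfolding prob_simplex_def using sum_tilt[of P f l] tilt_pos[of P f l] by (auto intro: less_imp_le)

lemma tilt_0: "P \<in> prob_simplex \<Longrightarrow> tilt P f 0 = P"
  unfolding tilt_def mgf_def prob_simplex_def by auto

lemma rel_entropy_tilt_decomp:
  fixes Q P f :: "'a::finite \<Rightarrow> real"
  assumes Q: "Q \<in> prob_simplex" and P: "\<And>x. 0 < P x"
  shows "rel_entropy Q P = rel_entropy Q (tilt P f l) + l * expect Q f - ln (mgf P f l)"
proof -
  have Q0: "\<And>x. 0 \<le> Q x" and Q1: "(\<Sum>a\<in>UNIV. Q a) = 1"
    using Q by (auto simp: prob_simplex_def)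
  have "Q x * ln (Q x / P x) = Q x * ln (Q x / tilt P f l x) + (l * (Q x * f x) - ln (mgf P f l) * Q x)"
    for x
  proof (cases "Q x = 0")
    case False
    then have "Q x > 0" using Q0[of x] by simp
    have "ln (tilt P f l x) = ln (P x) + l * f x - ln (mgf P f l)"
      unfolding tilt_def using P[of x] mgf_pos[of P f l, OF P] by (simp add: ln_div ln_mult)
    then have "ln (Q x / P x) = ln (Q x / tilt P f l x) + (l * f x - ln (mgf P f l))"
      using \<open>Q x > 0\<close> tilt_pos[of P f l x, OF P] P[of x] by (simp add: ln_div)
    then show ?thesis by (simp only:) (simp add: algebra_simps)
  qed simp
  then have "rel_entropy Q P
      = (\<Sum>x\<in>UNIV. Q x * ln (Q x / tilt P f l x) + (l * (Q x * f x) - ln (mgf P f l) * Q x))"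
    unfolding rel_entropy_def by simp
  also have "\<dots> = rel_entropy Q (tilt P f l) + l * expect Q f - ln (mgf P f l)"
    unfolding rel_entropy_def expect_def
    by (simp add: sum.distrib sum_subtractf sum_distrib_left[symmetric] Q1)
  finally show ?thesis .
qed

text \<open>The variational (Donsker--Varadhan) bound; equality holds at \<open>Q = tilt P f l\<close>.\<close>
lemma expect_minus_ln_mgf_le_rel_entropy:
  fixes Q P f :: "'a::finite \<Rightarrow> real"
  assumes "Q \<in> prob_simplex" and P: "\<And>x. 0 < P x"
  shows "l * expect Q f - ln (mgf P f l) \<le> rel_entropy Q P"
  using rel_entropy_tilt_decomp[OF assms, where f=f and l=l]
    rel_entropy_nonneg[OF assms(1) tilt_pos[OF P] sum_tilt[OF P]] by simp

lemma rel_entropy_tilt: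
  assumes "\<And>x. 0 < P x"
  shows "rel_entropy (tilt P f l) P = l * expect (tilt P f l) f - ln (mgf P f l)"
  using rel_entropy_tilt_decomp[OF tilt_in_prob_simplex[OF assms] assms, where f=f and l=l]
  by (simp add: rel_entropy_self)

lemma expect_tilt_minus:
  assumes P: "\<And>x. 0 < P x"
  shows "expect (tilt P f l) f - g
    = exp (l * g) / mgf P f l * (\<Sum>a\<in>UNIV. P a * exp (l * (f a - g)) * (f a - g))"
proof -
  have "expect (tilt P f l) f - g = (\<Sum>a\<in>UNIV. tilt P f l a * (f a - g))"
    using sum_tilt[OF P, where f=f and l=l] by (simp add: expect_def algebra_simps sum_subtractf sum_distrib_left[symmetric])
  also have "\<dots> = (\<Sum>a\<in>UNIV. exp (l * g) / mgf P f l * (P a * exp (l * (f a - g)) * (f a - g)))"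
    unfolding tilt_def using mgf_pos[OF P, where f=f and l=l]
    by (intro sum.cong) (simp_all add: field_simps flip: exp_add)
  finally show ?thesis by (simp add: sum_distrib_left)
qed

lemma exists_tilt_expect_gt:
  fixes P f :: "'a::finite \<Rightarrow> real"
  assumes P: "\<And>x. 0 < P x" and x1: "g < f x1"
  shows "\<exists>L\<ge>0. g < expect (tilt P f L) f"
proof -
  define a where "a = f x1 - g"
  define C where "C = (\<Sum>x\<in>UNIV. P x * \<bar>f x - g\<bar>)"
  define L where "L = C / (P x1 * a\<^sup>2)"
  have "a > 0" using x1 by (simp add: a_def)
  have "C \<ge> 0" unfolding C_def using P by (intro sum_nonneg) (simp add: less_imp_le)
  then have "L \<ge> 0" unfolding L_def using P[of x1] \<open>a > 0\<close> by simp
  have "C < P x1 * a * (1 + L * a)"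
    using P[of x1] \<open>a > 0\<close> by (simp add: L_def power2_eq_square field_simps)
  also have "\<dots> \<le> P x1 * a * exp (L * a)"
    using P[of x1] \<open>a > 0\<close> by (intro mult_left_mono exp_ge_add_one_self) simp
  finally have big: "C < P x1 * a * exp (L * a)" .
  have "P x * exp (L * (f x - g)) * (f x - g)
      \<ge> (if x = x1 then P x1 * exp (L * a) * a else 0) - P x * \<bar>f x - g\<bar>" for x
  proof (cases "g \<le> f x")
    case True
    have "0 \<le> P x * exp (L * (f x - g)) * (f x - g)" "0 \<le> P x * (f x - g)"
      using True P[of x] by simp_all
    then show ?thesis using True x1 by (auto simp: a_def)
  next
    case False
    have "exp (L * (f x - g)) \<le> 1" using False \<open>L \<ge> 0\<close> by (simp add: mult_nonneg_nonpos)
    then have "P x * exp (L * (f x - g)) * (g - f x) \<le> P x * (g - f x)"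
      using False P[of x] by (simp add: mult_right_le_one_le)
    then show ?thesis using False x1 by (auto simp: algebra_simps)
  qed
  then have "(\<Sum>x\<in>UNIV. (if x = x1 then P x1 * exp (L * a) * a else 0) - P x * \<bar>f x - g\<bar>)
      \<le> (\<Sum>x\<in>UNIV. P x * exp (L * (f x - g)) * (f x - g))"
    by (rule sum_mono)
  then have "0 < (\<Sum>x\<in>UNIV. P x * exp (L * (f x - g)) * (f x - g))"
    using big by (simp add: sum_subtractf C_def algebra_simps)
  then have "0 < expect (tilt P f L) f - g"
    unfolding expect_tilt_minus[OF P] using mgf_pos[OF P, where f=f and l=L] by simp
  then show ?thesis using \<open>L \<ge> 0\<close> by auto
qed

lemma continuous_on_expect_tilt:
  assumes "\<And>x. 0 < P x"
  shows "continuous_on S (\<lambda>l. expect (tilt P f l) f)"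
proof -
  have "mgf P f l \<noteq> 0" for l using mgf_pos[where P=P, OF assms, of f l] by simp
  then show ?thesis
    unfolding expect_def tilt_def mgf_def by (intro continuous_intros) auto
qed

text \<open>The change-of-measure lower bound needs a positive, strictly feasible \<open>Q\<close>; it is obtained by
  mixing a little of \<open>R\<close> into \<open>Qs\<close>.\<close>
lemma exists_strictly_feasible_near:
  fixes P Qs R f :: "'a::finite \<Rightarrow> real"
  assumes P: "\<And>x. 0 < P x" and Qs: "Qs \<in> prob_simplex" "\<And>x. 0 < Qs x" "g \<le> expect Qs f"
    and R: "R \<in> prob_simplex" "g < expect R f" and \<delta>: "0 < \<delta>"
  shows "\<exists>Q. Q \<in> prob_simplex \<and> (\<forall>x. 0 < Q x) \<and> g < expect Q f
    \<and> rel_entropy Q P < rel_entropy Qs P + \<delta>"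
proof -
  define Qt where "Qt t x = (1 - t) * Qs x + t * R x" for t x
  have "((\<lambda>t. rel_entropy (Qt t) P) \<longlongrightarrow> rel_entropy Qs P) (at_right 0)"
    unfolding rel_entropy_def Qt_def
    by (auto intro!: tendsto_eq_intros simp: less_imp_neq[symmetric] Qs(2) P)
  then have "eventually (\<lambda>t. rel_entropy (Qt t) P < rel_entropy Qs P + \<delta>) (at_right 0)"
    using \<delta> by (intro order_tendstoD(2)) auto
  moreover have "eventually (\<lambda>t. t < (1::real)) (at_right 0)"
    unfolding eventually_at_right_field by (intro exI[of _ 1]) auto
  moreover have "eventually (\<lambda>t. 0 < (t::real)) (at_right 0)"
    by (rule eventually_at_right_less)
  ultimately have "eventually (\<lambda>t. rel_entropy (Qt t) P < rel_entropy Qs P + \<delta> \<and> t < 1 \<and> 0 < t)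
      (at_right 0)"
    by (simp add: eventually_conj_iff)
  then obtain t where t: "0 < t" "t < 1" and close: "rel_entropy (Qt t) P < rel_entropy Qs P + \<delta>"
    using eventually_happens'[OF trivial_limit_at_right_real] by blast
  have R0: "\<And>x. 0 \<le> R x" and sums: "(\<Sum>a\<in>UNIV. Qs a) = 1" "(\<Sum>a\<in>UNIV. R a) = 1"
    using Qs(1) R(1) by (auto simp: prob_simplex_def)
  have pos: "\<forall>x. 0 < Qt t x"
    using t Qs(2) R0 unfolding Qt_def by (simp add: add_pos_nonneg)
  have "(\<Sum>a\<in>UNIV. Qt t a) = 1"
    unfolding Qt_def using sums by (simp add: sum.distrib sum_distrib_left[symmetric])
  then have simplex: "Qt t \<in> prob_simplex" using pos by (auto simp: prob_simplex_def intro: less_imp_le)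
  have "expect (Qt t) f = (1 - t) * expect Qs f + t * expect R f"
    unfolding Qt_def expect_def
    by (simp add: sum.distrib sum_distrib_left sum_subtractf ring_distribs left_diff_distrib mult.assoc)
  moreover have "(1 - t) * g \<le> (1 - t) * expect Qs f" "t * g < t * expect R f"
    using t Qs(3) R(2) by (simp_all add: mult_left_mono)
  ultimately have "g < expect (Qt t) f" by (simp add: algebra_simps)
  then show ?thesis using simplex pos close by blast
qed

section \<open>Large deviations of threshold events\<close>

text \<open>The Chernoff bound with base \<open>M t = mgf Q (\<lambda>a. c - u a) t\<close>: since \<open>M 0 = 1\<close> and
  \<open>M' 0 = c - expect Q u < 0\<close>, some \<open>t > 0\<close> has \<open>M t < 1\<close>.\<close>
lemma iid_prob_sum_below_mean_tendsto_0:
  fixes Q u :: "'a::finite \<Rightarrow> real"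
  assumes Q: "Q \<in> prob_simplex" and c: "c < expect Q u"
  shows "(\<lambda>n. iid_prob Q n (\<lambda>xs. sum_list (map u xs) \<le> real n * c)) \<longlonglongrightarrow> 0"
proof -
  define M where "M t = (\<Sum>a\<in>UNIV. Q a * exp (t * (- u a - - c)))" for t
  have Q0: "\<And>x. 0 \<le> Q x" and Q1: "(\<Sum>a\<in>UNIV. Q a) = 1"
    using Q by (auto simp: prob_simplex_def)
  have "(M has_real_derivative (\<Sum>a\<in>UNIV. Q a * (- u a - - c))) (at 0)"
    unfolding M_def by (auto intro!: derivative_eq_intros sum.cong)
  moreover have "(\<Sum>a\<in>UNIV. Q a * (- u a - - c)) = c * (\<Sum>a\<in>UNIV. Q a) - expect Q u"
    by (simp add: expect_def algebra_simps sum_subtractf sum_distrib_left)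
  ultimately have "(M has_real_derivative (c - expect Q u)) (at 0)" using Q1 by simp
  moreover have "c - expect Q u < 0" using c by simp
  ultimately have "\<exists>d>0. \<forall>h>0. h < d \<longrightarrow> M (0 + h) < M 0"
    by (rule DERIV_neg_dec_right)
  then obtain d where "0 < d" and "\<And>h. 0 < h \<Longrightarrow> h < d \<Longrightarrow> M h < M 0" by auto
  then have "M (d / 2) < M 0" by simp
  then have Mt: "M (d / 2) < 1" using Q1 by (simp add: M_def)
  have "M (d / 2) \<ge> 0" unfolding M_def by (intro sum_nonneg mult_nonneg_nonneg Q0) auto
  then have lim: "(\<lambda>n. M (d / 2) ^ n) \<longlonglongrightarrow> 0" using Mt by (intro LIMSEQ_power_zero) auto
  have "iid_prob Q n (\<lambda>xs. sum_list (map u xs) \<le> real n * c) \<le> M (d / 2) ^ n" for n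
    unfolding M_def
    by (rule iid_prob_chernoff_bound[OF Q0]) (use \<open>d > 0\<close> in \<open>auto simp: sum_list_map_uminus\<close>)
  moreover have "0 \<le> iid_prob Q n (\<lambda>xs. sum_list (map u xs) \<le> real n * c)" for n
    unfolding iid_prob_def by (intro sum_nonneg prod_list_map_nonneg Q0)
  ultimately have "\<forall>\<^sub>F n in sequentially.
      norm (iid_prob Q n (\<lambda>xs. sum_list (map u xs) \<le> real n * c)) \<le> M (d / 2) ^ n"
    by (intro always_eventually) simp
  then show ?thesis using lim by (rule Lim_null_comparison)
qed

lemma exp_neg_mult_tendsto_0: "0 < d \<Longrightarrow> (\<lambda>n. exp (- real n * d)) \<longlonglongrightarrow> 0"
  using LIMSEQ_power_zero[of "exp (- d)"] by (simp add: exp_of_nat_mult[symmetric] mult.commute)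

lemma prod_list_map_eq_likelihood_ratio:
  fixes P Q :: "'a \<Rightarrow> real"
  assumes "\<And>x. 0 < P x" and "\<And>x. 0 < Q x"
  shows "prod_list (map P xs) = prod_list (map Q xs) * exp (- sum_list (map (\<lambda>x. ln (Q x / P x)) xs))"
proof -
  have "P x = Q x * exp (- ln (Q x / P x))" for x
  proof -
    have "exp (ln (Q x / P x)) = Q x / P x" using assms[of x] by simp
    then show ?thesis using assms[of x] by (simp add: exp_minus field_simps)
  qed
  then have "map P xs = map (\<lambda>x. Q x * exp (- ln (Q x / P x))) xs" by simp
  then show ?thesis by (simp only: prod_list_map_mult_exp sum_list_map_uminus)
qed

lemma iid_prob_typical_eventually_ge_half:
  fixes Q f h :: "'a::finite \<Rightarrow> real"
  assumes Q: "Q \<in> prob_simplex" and f: "g < expect Q f" and h: "expect Q h < b"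
  shows "eventually (\<lambda>n. 1/2 \<le> iid_prob Q n
    (\<lambda>xs. real n * g < sum_list (map f xs) \<and> sum_list (map h xs) < real n * b)) sequentially"
proof -
  have Q0: "\<And>x. 0 \<le> Q x" using Q by (simp add: prob_simplex_def)
  define low_f where "low_f n xs \<longleftrightarrow> sum_list (map f xs) \<le> real n * g" for n xs
  define high_h where "high_h n xs \<longleftrightarrow> sum_list (map (\<lambda>x. - h x) xs) \<le> real n * - b" for n xs
  have "- b < expect Q (\<lambda>x. - h x)" using h by (simp add: expect_def sum_negf)
  then have "(\<lambda>n. iid_prob Q n (high_h n)) \<longlonglongrightarrow> 0"
    unfolding high_h_def by (rule iid_prob_sum_below_mean_tendsto_0[OF Q])
  moreover have "(\<lambda>n. iid_prob Q n (low_f n)) \<longlonglongrightarrow> 0"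
    unfolding low_f_def using f by (rule iid_prob_sum_below_mean_tendsto_0[OF Q])
  ultimately have "eventually (\<lambda>n. iid_prob Q n (low_f n) < 1/4 \<and> iid_prob Q n (high_h n) < 1/4) sequentially"
    by (intro eventually_conj order_tendstoD(2)[where y = 0]) auto
  then show ?thesis
  proof eventually_elim
    case (elim n)
    have typical: "(\<lambda>xs. real n * g < sum_list (map f xs) \<and> sum_list (map h xs) < real n * b)
        = (\<lambda>xs. \<not> (low_f n xs \<or> high_h n xs))"
      by (auto simp: fun_eq_iff low_f_def high_h_def sum_list_map_uminus)
    show ?case
      unfolding typical using iid_prob_not[OF Q, of n "\<lambda>xs. low_f n xs \<or> high_h n xs"]
        iid_prob_disj_le[where P=Q and n=n and F="low_f n" and G="high_h n", OF Q0] elim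
      by linarith
  qed
qed

text \<open>Change of measure to a \<open>Q\<close> under which the event is typical: on the \<open>Q\<close>-typical sequences
  the likelihood ratio \<open>P\<^sup>n / Q\<^sup>n\<close> is about \<open>exp (- n D(Q\<parallel>P))\<close>.\<close>
lemma iid_prob_lower_bound:
  fixes P Q f :: "'a::finite \<Rightarrow> real"
  assumes P: "\<And>x. 0 < P x" and Q: "Q \<in> prob_simplex" "\<And>x. 0 < Q x"
    and g: "g < expect Q f" and \<delta>: "0 < \<delta>"
    and E: "\<And>xs. real (length xs) * g < sum_list (map f xs) \<Longrightarrow> E xs"
  shows "eventually (\<lambda>n. exp (- real n * (rel_entropy Q P + \<delta>)) \<le> iid_prob P n E) sequentially"
proof -
  define h where "h = (\<lambda>x. ln (Q x / P x))"
  define D where "D = rel_entropy Q P"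
  define typical where "typical n xs \<longleftrightarrow>
    real n * g < sum_list (map f xs) \<and> sum_list (map h xs) < real n * (D + \<delta> / 2)" for n xs
  have "expect Q h = D" unfolding D_def h_def expect_def rel_entropy_def ..
  then have "eventually (\<lambda>n. 1/2 \<le> iid_prob Q n (typical n)) sequentially"
    unfolding typical_def using g \<delta> by (intro iid_prob_typical_eventually_ge_half[OF Q(1)]) auto
  moreover have "eventually (\<lambda>n. exp (- real n * (\<delta> / 2)) < 1/2) sequentially"
    using exp_neg_mult_tendsto_0[of "\<delta> / 2"] \<delta> by (intro order_tendstoD(2)[where y = 0]) auto
  ultimately show ?thesis
  proof eventually_elim
    case (elim n)
    define c where "c = exp (- real n * (D + \<delta> / 2))"
    have "c * iid_prob Q n (typical n) \<le> iid_prob P n (typical n)"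
    proof (rule iid_prob_change_of_measure)
      fix xs :: "'a list"
      assume "length xs = n" and "typical n xs"
      then have "c \<le> exp (- sum_list (map h xs))"
        unfolding c_def typical_def by simp
      then show "c * prod_list (map Q xs) \<le> prod_list (map P xs)"
        unfolding prod_list_map_eq_likelihood_ratio[where P=P and Q=Q and xs=xs, OF P Q(2)] h_def[symmetric]
        using prod_list_map_nonneg[of Q xs] Q(2) by (metis less_imp_le mult.commute mult_right_mono)
    qed (use Q(2) in \<open>simp add: less_imp_le\<close>)
    also have "\<dots> \<le> iid_prob P n E"
      using P by (intro iid_prob_mono) (auto simp: less_imp_le typical_def intro: E)
    finally have "c * iid_prob Q n (typical n) \<le> iid_prob P n E" .
    moreover have "c * (1/2) \<le> c * iid_prob Q n (typical n)"
      using elim by (intro mult_left_mono) (simp_all add: c_def)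
    moreover have "exp (- real n * (D + \<delta>)) = c * exp (- real n * (\<delta> / 2))"
      unfolding c_def by (simp add: algebra_simps flip: exp_add)
    moreover have "c * exp (- real n * (\<delta> / 2)) \<le> c * (1/2)"
      using elim by (intro mult_left_mono) (simp_all add: c_def)
    ultimately show ?case unfolding D_def by linarith
  qed
qed

lemma err_exponent_eqI:
  fixes eps :: "nat \<Rightarrow> real"
  assumes upper: "\<And>n. eps n \<le> exp (- real n * c)"
    and lower: "\<And>\<delta>. 0 < \<delta> \<Longrightarrow> eventually (\<lambda>n. exp (- real n * (c + \<delta>)) \<le> eps n) sequentially"
  shows "err_exponent eps = ereal c"
proof -
  define X where "X n = - ln (eps n) / real n" for n
  have bounds: "c \<le> X n" "X n \<le> c + \<delta>"
    if "0 < n" and "exp (- real n * (c + \<delta>)) \<le> eps n" for n \<delta>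
  proof -
    have "0 < eps n" using exp_gt_zero that(2) by (rule order.strict_trans2)
    then have "- real n * (c + \<delta>) \<le> ln (eps n)" "ln (eps n) \<le> - real n * c"
      using that(2) upper[of n] by (metis ln_exp ln_le_cancel_iff exp_gt_zero)+
    then show "c \<le> X n" "X n \<le> c + \<delta>" using \<open>0 < n\<close> by (simp_all add: X_def field_simps)
  qed
  have "X \<longlonglongrightarrow> c"
  proof (rule order_tendstoI)
    fix a assume "a < c"
    have "eventually (\<lambda>n. exp (- real n * (c + 1)) \<le> eps n) sequentially" by (rule lower) simp
    then show "eventually (\<lambda>n. a < X n) sequentially"
      using eventually_gt_at_top[of 0]
    proof eventually_elim
      case (elim n)
      show ?case using bounds[OF elim(2,1)] \<open>a < c\<close> by linarith
    qed
  next
    fix a assume "c < a"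
    then have "eventually (\<lambda>n. exp (- real n * (c + (a - c) / 2)) \<le> eps n) sequentially"
      by (intro lower) simp
    then show "eventually (\<lambda>n. X n < a) sequentially"
      using eventually_gt_at_top[of 0]
    proof eventually_elim
      case (elim n)
      show ?case using bounds[OF elim(2,1)] \<open>c < a\<close> by (auto simp: field_simps)
    qed
  qed
  then have "liminf (\<lambda>n. ereal (X n)) = ereal c"
    by (intro lim_imp_Liminf) (simp_all add: tendsto_ereal)
  then show ?thesis unfolding err_exponent_def X_def .
qed

text \<open>The Karush--Kuhn--Tucker conditions for minimising \<open>D(Q\<parallel>P)\<close> subject to
  \<open>expect Q f \<ge> g\<close>, the multiplier being the tilting parameter.\<close>
definition kkt_tilt :: "('a::finite \<Rightarrow> real) \<Rightarrow> ('a \<Rightarrow> real) \<Rightarrow> real \<Rightarrow> real \<Rightarrow> bool" where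
  "kkt_tilt P f g l \<longleftrightarrow> 0 \<le> l \<and> g \<le> expect (tilt P f l) f \<and> l * (expect (tilt P f l) f - g) = 0"

lemma rel_entropy_kkt_tilt:
  assumes "\<And>x. 0 < P x" and "kkt_tilt P f g l"
  shows "rel_entropy (tilt P f l) P = l * g - ln (mgf P f l)"
  using rel_entropy_tilt[where P=P, OF assms(1), of f l] assms(2)
  by (simp add: kkt_tilt_def algebra_simps)

lemma kkt_tilt_is_arg_min:
  assumes P: "\<And>x. 0 < P x" and kkt: "kkt_tilt P f g l"
  shows "is_arg_min (\<lambda>Q. rel_entropy Q P) (\<lambda>Q. Q \<in> prob_simplex \<and> g \<le> expect Q f) (tilt P f l)"
proof -
  have "rel_entropy (tilt P f l) P \<le> rel_entropy Q P" if "Q \<in> prob_simplex" "g \<le> expect Q f" for Q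
  proof -
    have "l * g \<le> l * expect Q f" using kkt that(2) by (simp add: kkt_tilt_def mult_left_mono)
    then show ?thesis
      using expect_minus_ln_mgf_le_rel_entropy[where P=P, OF that(1) P, of l f]
        rel_entropy_kkt_tilt[OF P kkt] by simp
  qed
  then show ?thesis
    using tilt_in_prob_simplex[where P=P, OF P] kkt
    by (auto simp: is_arg_min_linorder kkt_tilt_def)
qed

lemma kkt_tilt_is_arg_max:
  assumes P: "\<And>x. 0 < P x" and kkt: "kkt_tilt P f g l"
  shows "is_arg_max (\<lambda>l. l * g - ln (mgf P f l)) (\<lambda>l. 0 \<le> l) l"
proof -
  have "l' * g - ln (mgf P f l') \<le> l * g - ln (mgf P f l)" if "0 \<le> l'" for l'
  proof -
    have "l' * g \<le> l' * expect (tilt P f l) f" using kkt that by (simp add: kkt_tilt_def mult_left_mono)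
    then show ?thesis
      using expect_minus_ln_mgf_le_rel_entropy[where P=P and l=l' and f=f,
          OF tilt_in_prob_simplex[where P=P and f=f and l=l, OF P] P]
        rel_entropy_kkt_tilt[OF P kkt] by simp
  qed
  then show ?thesis using kkt by (auto simp: is_arg_max_linorder kkt_tilt_def)
qed

lemma err_exponent_kkt_tilt:
  fixes P f :: "'a::finite \<Rightarrow> real"
  assumes P: "P \<in> prob_simplex" "\<And>x. 0 < P x" and x1: "g < f x1" and kkt: "kkt_tilt P f g l"
    and E_upper: "\<And>xs. E xs \<Longrightarrow> real (length xs) * g \<le> sum_list (map f xs)"
    and E_lower: "\<And>xs. real (length xs) * g < sum_list (map f xs) \<Longrightarrow> E xs"
  shows "err_exponent (\<lambda>n. iid_prob P n E) = ereal (rel_entropy (tilt P f l) P)"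
proof (rule err_exponent_eqI)
  define D where "D = rel_entropy (tilt P f l) P"
  fix n
  have "iid_prob P n E \<le> (\<Sum>a\<in>UNIV. P a * exp (l * (f a - g))) ^ n"
    using P(2) kkt E_upper by (intro iid_prob_chernoff_bound) (auto simp: kkt_tilt_def less_imp_le)
  also have "(\<Sum>a\<in>UNIV. P a * exp (l * (f a - g))) = mgf P f l * exp (- (l * g))"
    unfolding mgf_def sum_distrib_right
    by (rule sum.cong) (simp_all add: right_diff_distrib exp_diff exp_minus field_simps)
  also have "\<dots> = exp (- D)"
    using mgf_pos[where P=P, OF P(2), of f l] unfolding D_def rel_entropy_kkt_tilt[OF P(2) kkt]
    by (simp add: exp_diff exp_minus field_simps)
  finally show "iid_prob P n E \<le> exp (- real n * D)"
    by (simp add: exp_of_nat_mult[symmetric])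
next
  fix \<delta> :: real
  assume "0 < \<delta>"
  have T: "tilt P f l' \<in> prob_simplex" "0 < tilt P f l' x" for l' x
    using tilt_in_prob_simplex[where P=P, OF P(2)] tilt_pos[where P=P, OF P(2)] by auto
  obtain L where "g < expect (tilt P f L) f"
    using exists_tilt_expect_gt[where P=P and f=f and g=g, OF P(2) x1] by blast
  moreover have "g \<le> expect (tilt P f l) f" using kkt by (simp add: kkt_tilt_def)
  ultimately obtain Q where Q: "Q \<in> prob_simplex" "\<forall>x. 0 < Q x" "g < expect Q f"
    and close: "rel_entropy Q P < rel_entropy (tilt P f l) P + \<delta> / 2"
    using exists_strictly_feasible_near[OF P(2) T(1) T(2) _ T(1)] \<open>0 < \<delta>\<close> by (meson half_gt_zero)
  have "eventually (\<lambda>n. exp (- real n * (rel_entropy Q P + \<delta> / 2)) \<le> iid_prob P n E) sequentially"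
    using Q \<open>0 < \<delta>\<close> by (intro iid_prob_lower_bound[where P=P, OF P(2)] E_lower) auto
  then show "eventually (\<lambda>n. exp (- real n * (rel_entropy (tilt P f l) P + \<delta>)) \<le> iid_prob P n E) sequentially"
  proof eventually_elim
    case (elim n)
    have "exp (- real n * (rel_entropy (tilt P f l) P + \<delta>)) \<le> exp (- real n * (rel_entropy Q P + \<delta> / 2))"
      using close by (simp add: mult_left_mono)
    then show ?case using elim by linarith
  qed
qed

lemma kkt_tilt_0:
  assumes "P \<in> prob_simplex" and "g \<le> expect P f"
  shows "kkt_tilt P f g 0"
  using assms by (simp add: kkt_tilt_def tilt_0)

lemma exists_kkt_tilt_expect_eq:
  assumes P: "P \<in> prob_simplex" "\<And>x. 0 < P x" and x1: "g < f x1" and "expect P f \<le> g"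
  shows "\<exists>l. kkt_tilt P f g l \<and> expect (tilt P f l) f = g"
proof -
  obtain L where "0 \<le> L" "g < expect (tilt P f L) f"
    using exists_tilt_expect_gt[where P=P and f=f and g=g, OF P(2) x1] by blast
  moreover have "expect (tilt P f 0) f \<le> g" using assms(4) tilt_0[OF P(1)] by simp
  ultimately obtain l where "0 \<le> l" "expect (tilt P f l) f = g"
    using IVT'[of "\<lambda>l. expect (tilt P f l) f" 0 g L] continuous_on_expect_tilt[where P=P, OF P(2)]
    by fastforce
  then show ?thesis by (auto simp: kkt_tilt_def)
qed

lemma threshold_event_exponent:
  fixes P f :: "'a::finite \<Rightarrow> real"
  assumes P: "P \<in> prob_simplex" "\<And>x. 0 < P x" and x1: "g < f x1"
    and E_upper: "\<And>xs. E xs \<Longrightarrow> real (length xs) * g \<le> sum_list (map f xs)"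
    and E_lower: "\<And>xs. real (length xs) * g < sum_list (map f xs) \<Longrightarrow> E xs"
  shows "(expect P f \<le> g \<longrightarrow> (\<exists>l\<ge>0. expect (tilt P f l) f = g
            \<and> is_arg_min (\<lambda>Q. rel_entropy Q P) (\<lambda>Q. Q \<in> prob_simplex \<and> g \<le> expect Q f) (tilt P f l)
            \<and> err_exponent (\<lambda>n. iid_prob P n E) = ereal (rel_entropy (tilt P f l) P)))
      \<and> (\<not> expect P f \<le> g \<longrightarrow>
            is_arg_min (\<lambda>Q. rel_entropy Q P) (\<lambda>Q. Q \<in> prob_simplex \<and> g \<le> expect Q f) P
            \<and> err_exponent (\<lambda>n. iid_prob P n E) = 0)
      \<and> (\<exists>l. is_arg_max (\<lambda>l. l * g - ln (mgf P f l)) (\<lambda>l. 0 \<le> l) l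
            \<and> err_exponent (\<lambda>n. iid_prob P n E) = ereal (l * g - ln (mgf P f l)))"
proof (cases "expect P f \<le> g")
  case True
  then obtain l where kkt: "kkt_tilt P f g l" and "expect (tilt P f l) f = g"
    using exists_kkt_tilt_expect_eq[where P=P and f=f and g=g, OF P x1] by blast
  then show ?thesis
    using True kkt_tilt_is_arg_min[OF P(2) kkt] kkt_tilt_is_arg_max[OF P(2) kkt]
      err_exponent_kkt_tilt[OF P x1 kkt E_upper E_lower] rel_entropy_kkt_tilt[OF P(2) kkt]
    by (auto simp: kkt_tilt_def)
next
  case False
  then have kkt: "kkt_tilt P f g 0" by (intro kkt_tilt_0 P(1)) simp
  then show ?thesis
    using False kkt_tilt_is_arg_min[OF P(2) kkt] kkt_tilt_is_arg_max[OF P(2) kkt]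
      err_exponent_kkt_tilt[OF P x1 kkt E_upper E_lower] rel_entropy_kkt_tilt[OF P(2) kkt]
    by (auto simp: tilt_0[OF P(1)] rel_entropy_self zero_ereal_def)
qed

section \<open>The mismatched likelihood ratio test\<close>

lemma powr_neg_mult_powr:
  fixes a b l :: real
  assumes "0 < a" "0 < b"
  shows "a powr (- l) * b powr l = exp (l * ln (b / a))"
proof -
  have "a powr (- l) * b powr l = exp (- l * ln a) * exp (l * ln b)"
    using assms by (simp add: powr_def)
  also have "\<dots> = exp (l * ln (b / a))"
    using assms by (simp add: exp_add[symmetric] ln_div algebra_simps)
  finally show ?thesis .
qed

lemma sum_powr_eq_mgf:
  assumes "\<And>x. 0 < A x" "\<And>x. 0 < B x"
  shows "(\<Sum>x\<in>UNIV. P x * A x powr (- l) * B x powr l) = mgf P (\<lambda>x. ln (B x / A x)) l"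
  unfolding mgf_def using assms by (simp add: powr_neg_mult_powr mult.assoc)

lemma tilted_eq_tilt:
  assumes "\<And>x. 0 < A x" "\<And>x. 0 < B x"
  shows "tilted P A B l = tilt P (\<lambda>x. ln (B x / A x)) l"
  unfolding tilted_def tilt_def sum_powr_eq_mgf[OF assms, symmetric] using assms
  by (simp add: powr_neg_mult_powr mult.assoc)

lemma mm_stat_eq_expect:
  assumes "\<And>x. 0 < A x" "\<And>x. 0 < B x" "\<And>x. 0 \<le> Q x"
  shows "mm_stat A B Q = expect Q (\<lambda>x. ln (B x / A x))"
proof -
  have "Q x * ln (Q x / A x) - Q x * ln (Q x / B x) = Q x * ln (B x / A x)" for x
  proof (cases "Q x = 0")
    case False
    then have "Q x > 0" using assms(3)[of x] by simp
    then show ?thesis using assms(1,2)[of x] by (simp add: ln_div algebra_simps)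
  qed simp
  then show ?thesis
    unfolding mm_stat_def rel_entropy_def expect_def by (simp add: sum_subtractf[symmetric])
qed

lemma mm_stat_swap: "mm_stat B A Q = - mm_stat A B Q"
  by (simp add: mm_stat_def)

lemma sum_list_eq_length_mult_expect_type_of:
  fixes f :: "'a::finite \<Rightarrow> real"
  shows "sum_list (map f xs) = real (length xs) * expect (type_of xs) f"
proof -
  have "sum_list (map f xs) = (\<Sum>a\<in>UNIV. real (count_list xs a) * f a)"
  proof (induction xs)
    case (Cons y xs)
    have "(\<Sum>a\<in>UNIV. real (count_list (y # xs) a) * f a)
        = (\<Sum>a\<in>UNIV. real (count_list xs a) * f a) + (\<Sum>a\<in>UNIV. if a = y then f a else 0)"
      unfolding sum.distrib[symmetric] by (rule sum.cong) (auto simp: algebra_simps)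
    then show ?case using Cons by simp
  qed simp
  then show ?thesis
    unfolding expect_def type_of_def by (cases "xs = []") (simp_all add: sum_distrib_left)
qed

lemma mismatched_test_exponent:
  fixes P A B :: "'a::finite \<Rightarrow> real"
  assumes P: "P \<in> prob_simplex" "\<And>x. 0 < P x" and A: "\<And>x. 0 < A x" and B: "\<And>x. 0 < B x"
    and nondeg: "\<exists>x. g < ln (B x / A x)"
    and E_upper: "\<And>xs. E xs \<Longrightarrow> g \<le> mm_stat A B (type_of xs)"
    and E_lower: "\<And>xs. g < mm_stat A B (type_of xs) \<Longrightarrow> E xs"
    \<comment> \<open>only a sandwich: the complementary event \<open>\<not> decides1\<close> is strict, so the swapped
      test is covered too\<close>
  shows "(mm_stat A B P \<le> g \<longrightarrow> (\<exists>l\<ge>0. mm_stat A B (tilted P A B l) = g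
            \<and> is_arg_min (\<lambda>Q. rel_entropy Q P) (\<lambda>Q. Q \<in> {Q \<in> prob_simplex. mm_stat A B Q \<ge> g})
                (tilted P A B l)
            \<and> err_exponent (\<lambda>n. iid_prob P n E) = ereal (rel_entropy (tilted P A B l) P)))
      \<and> (\<not> mm_stat A B P \<le> g \<longrightarrow>
            is_arg_min (\<lambda>Q. rel_entropy Q P) (\<lambda>Q. Q \<in> {Q \<in> prob_simplex. mm_stat A B Q \<ge> g}) P
            \<and> err_exponent (\<lambda>n. iid_prob P n E) = 0)
      \<and> (\<exists>l. is_arg_max (\<lambda>l. l * g - ln (\<Sum>x\<in>UNIV. P x * A x powr (- l) * B x powr l)) (\<lambda>l. l \<ge> 0) l
            \<and> err_exponent (\<lambda>n. iid_prob P n E)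
                = ereal (l * g - ln (\<Sum>x\<in>UNIV. P x * A x powr (- l) * B x powr l)))"
proof -
  define f where "f = (\<lambda>x. ln (B x / A x))"
  obtain x1 where x1: "g < f x1" using nondeg unfolding f_def by blast
  have mm: "mm_stat A B Q = expect Q f" if "Q \<in> prob_simplex" for Q
    unfolding f_def using that by (intro mm_stat_eq_expect[OF A B]) (simp add: prob_simplex_def)
  have mm_type: "real (length xs) * mm_stat A B (type_of xs) = sum_list (map f xs)" for xs
  proof -
    have "mm_stat A B (type_of xs) = expect (type_of xs) f"
      unfolding f_def by (rule mm_stat_eq_expect[OF A B]) (simp add: type_of_def)
    then show ?thesis by (simp add: sum_list_eq_length_mult_expect_type_of)
  qed
  have "E xs \<Longrightarrow> real (length xs) * g \<le> sum_list (map f xs)"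
    and "real (length xs) * g < sum_list (map f xs) \<Longrightarrow> E xs" for xs
    using E_upper[of xs] E_lower[of xs] unfolding mm_type[symmetric]
    by (auto simp: mult_left_mono mult_less_cancel_left)
  from threshold_event_exponent[where P=P and f=f and g=g, OF P x1 this]
  show ?thesis
    unfolding tilted_eq_tilt[OF A B] sum_powr_eq_mgf[OF A B] f_def[symmetric]
      mm[OF P(1)] mm[OF tilt_in_prob_simplex[where P=P, OF P(2)]]
    by (simp add: mm cong: conj_cong)
qed

theorem theorem1:
  fixes P0 P1 hP0 hP1 :: "'a::finite \<Rightarrow> real" and g :: real
  assumes dist: "P0 \<in> prob_simplex" "P1 \<in> prob_simplex" "hP0 \<in> prob_simplex" "hP1 \<in> prob_simplex"
    and pos: "\<And>x. P0 x > 0" "\<And>x. P1 x > 0" "\<And>x. hP0 x > 0" "\<And>x. hP1 x > 0"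
    and nondeg0: "\<exists>x. ln (hP1 x / hP0 x) > g"
    and nondeg1: "\<exists>x. ln (hP1 x / hP0 x) < g"
  defines "Q0 \<equiv> {Q \<in> prob_simplex. mm_stat hP0 hP1 Q \<ge> g}"
    and "Q1 \<equiv> {Q \<in> prob_simplex. mm_stat hP0 hP1 Q \<le> g}"
    and "E0 \<equiv> err_exponent (err0 P0 hP0 hP1 g)"
    and "E1 \<equiv> err_exponent (err1 P1 hP0 hP1 g)"
  shows
    "(mm_stat hP0 hP1 P0 \<le> g \<longrightarrow>
        (\<exists>l0\<ge>0. mm_stat hP0 hP1 (tilted P0 hP0 hP1 l0) = g
           \<and> is_arg_min (\<lambda>Q. rel_entropy Q P0) (\<lambda>Q. Q \<in> Q0) (tilted P0 hP0 hP1 l0)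
           \<and> E0 = ereal (rel_entropy (tilted P0 hP0 hP1 l0) P0)))
     \<and> (\<not> mm_stat hP0 hP1 P0 \<le> g \<longrightarrow>
        is_arg_min (\<lambda>Q. rel_entropy Q P0) (\<lambda>Q. Q \<in> Q0) P0 \<and> E0 = 0)
     \<and> (mm_stat hP0 hP1 P1 \<ge> g \<longrightarrow>
        (\<exists>l1\<ge>0. mm_stat hP0 hP1 (tilted P1 hP1 hP0 l1) = g
           \<and> is_arg_min (\<lambda>Q. rel_entropy Q P1) (\<lambda>Q. Q \<in> Q1) (tilted P1 hP1 hP0 l1)
           \<and> E1 = ereal (rel_entropy (tilted P1 hP1 hP0 l1) P1)))
     \<and> (\<not> mm_stat hP0 hP1 P1 \<ge> g \<longrightarrow>
        is_arg_min (\<lambda>Q. rel_entropy Q P1) (\<lambda>Q. Q \<in> Q1) P1 \<and> E1 = 0)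
     \<and> (\<exists>l. is_arg_max (\<lambda>l. l * g - ln (\<Sum>x\<in>UNIV. P0 x * hP0 x powr (- l) * hP1 x powr l))
              (\<lambda>l. l \<ge> 0) l
           \<and> E0 = ereal (l * g - ln (\<Sum>x\<in>UNIV. P0 x * hP0 x powr (- l) * hP1 x powr l)))
     \<and> (\<exists>l. is_arg_max (\<lambda>l. - l * g - ln (\<Sum>x\<in>UNIV. hP0 x powr l * P1 x * hP1 x powr (- l)))
              (\<lambda>l. l \<ge> 0) l
           \<and> E1 = ereal (- l * g - ln (\<Sum>x\<in>UNIV. hP0 x powr l * P1 x * hP1 x powr (- l))))"
proof -
  have "decides1 hP0 hP1 g xs \<Longrightarrow> g \<le> mm_stat hP0 hP1 (type_of xs)"
    and "g < mm_stat hP0 hP1 (type_of xs) \<Longrightarrow> decides1 hP0 hP1 g xs" for xs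
    by (simp_all add: decides1_def)
  note side0 = mismatched_test_exponent[where P=P0 and A=hP0 and B=hP1 and g=g
      and E="decides1 hP0 hP1 g", OF dist(1) pos(1,3,4) nondeg0 this]
  from nondeg1 obtain x where "ln (hP1 x / hP0 x) < g" by blast
  moreover have "ln (hP0 x / hP1 x) = - ln (hP1 x / hP0 x)" using pos(3,4)[of x] by (simp add: ln_div)
  ultimately have nondeg1': "\<exists>x. - g < ln (hP0 x / hP1 x)" by (intro exI[of _ x]) linarith
  have "\<not> decides1 hP0 hP1 g xs \<Longrightarrow> - g \<le> mm_stat hP1 hP0 (type_of xs)"
    and "- g < mm_stat hP1 hP0 (type_of xs) \<Longrightarrow> \<not> decides1 hP0 hP1 g xs" for xs
    by (auto simp: decides1_def mm_stat_swap[of hP1 hP0])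
  note side1 = mismatched_test_exponent[where P=P1 and A=hP1 and B=hP0 and g="- g"
      and E="\<lambda>xs. \<not> decides1 hP0 hP1 g xs", OF dist(2) pos(2,4,3) nondeg1' this]
  show ?thesis
    using side0 side1 unfolding Q0_def Q1_def E0_def E1_def err0_def err1_def
    by (simp add: mm_stat_swap[of hP1 hP0] mult_ac)
qed

end
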